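(* Let $\beta>1$, $m=m(\beta)$, $\varepsilon>0$, and $J_{n,\varepsilon}:=\{m-\varepsilon\le|W_n|\le m+\varepsilon\}$. Let $s=s_n$, $S=S_n\subset[n]$ with $|S|=s$ and $A=A_n\ge0$ satisfy $As\ll n$. Then there is $C>0$ (depending on $\beta,\varepsilon$) such that for all sufficiently large $n$, $\mathbb P_{\beta,\mathbf Q^{\rm CW},\boldsymbol\mu_S(A)}(J_{n,\varepsilon}^c)\le e^{-Cn}$.
   Context: Ising model $\mathbb P_{\beta,\mathbf Q,\boldsymbol\mu}(\mathbf X=\mathbf x)=Z(\beta,\mathbf Q,\boldsymbol\mu)^{-1}\exp(\frac\beta2\mathbf x^\top\mathbf Q\mathbf x+\boldsymbol\mu^\top\mathbf x)$ on $\{-1,1\}^n$; $\mathbf Q^{\rm CW}_{ij}=\mathbf 1(i\ne j)/n$; $\boldsymbol\mu_S(A)$ has entries $A\mathbf 1(i\in S)$. Auxiliary variable: given $\mathbf X$, $W_n\sim N(\bar{\mathbf X},1/(n\beta))$. $m(\beta)$ is the unique positive root of $m=\tanh(\beta m)$. $a_n\ll b_n$ means $a_n/b_n\to0$. *)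

theory Defs
  imports "HOL-Probability.Probability"
begin

definition spins :: "nat \<Rightarrow> (nat \<Rightarrow> real) set" where
  "spins n = PiE {..<n} (\<lambda>_. {-1, 1})"

definition ising_weight ::
  "nat \<Rightarrow> real \<Rightarrow> (nat \<Rightarrow> nat \<Rightarrow> real) \<Rightarrow> (nat \<Rightarrow> real) \<Rightarrow> (nat \<Rightarrow> real) \<Rightarrow> real" where
  "ising_weight n \<beta> Q \<mu> x =
     exp (\<beta> / 2 * (\<Sum>i<n. \<Sum>j<n. Q i j * x i * x j) + (\<Sum>i<n. \<mu> i * x i))"

definition ising_Z :: "nat \<Rightarrow> real \<Rightarrow> (nat \<Rightarrow> nat \<Rightarrow> real) \<Rightarrow> (nat \<Rightarrow> real) \<Rightarrow> real" where
  "ising_Z n \<beta> Q \<mu> = (\<Sum>x\<in>spins n. ising_weight n \<beta> Q \<mu> x)"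

definition ising_prob ::
  "nat \<Rightarrow> real \<Rightarrow> (nat \<Rightarrow> nat \<Rightarrow> real) \<Rightarrow> (nat \<Rightarrow> real) \<Rightarrow> (nat \<Rightarrow> real) \<Rightarrow> real" where
  "ising_prob n \<beta> Q \<mu> x = ising_weight n \<beta> Q \<mu> x / ising_Z n \<beta> Q \<mu>"

definition Q_CW :: "nat \<Rightarrow> nat \<Rightarrow> nat \<Rightarrow> real" where
  "Q_CW n i j = (if i \<noteq> j then 1 / real n else 0)"

definition mu_S :: "nat set \<Rightarrow> real \<Rightarrow> nat \<Rightarrow> real" where
  "mu_S S A i = (if i \<in> S then A else 0)"

definition spin_mean :: "nat \<Rightarrow> (nat \<Rightarrow> real) \<Rightarrow> real" where
  "spin_mean n x = (\<Sum>i<n. x i) / real n"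

text \<open>Probability that W_n lies in B under the joint law of (X, W_n):
  X ~ Ising(beta,Q,mu), and given X, W_n ~ N(mean X, 1/(n beta)).\<close>
definition W_prob ::
  "nat \<Rightarrow> real \<Rightarrow> (nat \<Rightarrow> nat \<Rightarrow> real) \<Rightarrow> (nat \<Rightarrow> real) \<Rightarrow> real set \<Rightarrow> real" where
  "W_prob n \<beta> Q \<mu> B =
     (\<Sum>x\<in>spins n. ising_prob n \<beta> Q \<mu> x *
        measure (density lborel (normal_density (spin_mean n x) (sqrt (1 / (real n * \<beta>))))) B)"

definition m_beta :: "real \<Rightarrow> real" where
  "m_beta \<beta> = (THE m. m > 0 \<and> m = tanh (\<beta> * m))"

end

theory Submission
  imports Defs "HOL-Real_Asymp.Real_Asymp"
begin

text \<open>Integrating out the spins (Hubbard--Stratonovich) shows that, up to factors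
  \<open>exp (\<plusminus>a)\<close> with \<open>a = \<Sum>i |\<mu> i| = A s\<close>, the law of \<open>W\<^sub>n\<close> has density proportional to
  \<open>exp (- n \<phi>(t))\<close>, where \<open>\<phi>(t) = \<beta> t\<^sup>2/2 - ln cosh (\<beta> t)\<close>. For \<open>\<beta> > 1\<close> the even function
  \<open>\<phi>\<close> is minimised exactly at \<open>\<plusminus>m(\<beta>)\<close>, so outside the band \<open>\<phi>\<close> exceeds its minimum by some
  \<open>\<eta> > 0\<close>, while on a short interval \<open>[m, m + \<delta>]\<close> it stays within \<open>\<eta>/2\<close> of it. Comparing
  the mass outside the band with the mass of that interval gives the bound
  \<open>exp (2a - n \<eta>/2)\<close> times a constant, and \<open>a = o(n)\<close> leaves \<open>exp (- n \<eta>/4)\<close>.\<close>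

section \<open>The mean-field equation\<close>

definition mf_residual :: "real \<Rightarrow> real \<Rightarrow> real" where
  "mf_residual \<beta> t = t - tanh (\<beta> * t)"

lemma has_real_derivative_mf_residual:
  "(mf_residual \<beta> has_real_derivative (1 - \<beta> * (1 - tanh (\<beta> * t)^2))) (at t)"
  unfolding mf_residual_def[abs_def]
  by (rule derivative_eq_intros refl | simp)+

lemma continuous_on_mf_residual: "continuous_on X (mf_residual \<beta>)"
  using has_real_derivative_mf_residual
  by (meson DERIV_isCont continuous_at_imp_continuous_on)

lemma mf_residual_pos_ge_1: "t \<ge> 1 \<Longrightarrow> mf_residual \<beta> t > 0"
  unfolding mf_residual_def using tanh_real_lt_1[of "\<beta> * t"] by linarith

lemma mf_residual_neg_near_0:
  assumes "\<beta> > 1"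
  obtains d where "d > 0" "\<And>t. 0 < t \<Longrightarrow> t < d \<Longrightarrow> mf_residual \<beta> t < 0"
proof -
  have "(mf_residual \<beta> has_real_derivative (1 - \<beta>)) (at 0)"
    using has_real_derivative_mf_residual[of \<beta> 0] by simp
  from DERIV_neg_dec_right[OF this] assms obtain d where
    "d > 0" "\<forall>h>0. h < d \<longrightarrow> mf_residual \<beta> 0 > mf_residual \<beta> (0 + h)"
    by auto
  then show ?thesis
    by (intro that[of d]) (auto simp: mf_residual_def)
qed

text \<open>Two positive zeros would, together with the zero at 0, give two critical points
  \<open>z\<^sub>1 < z\<^sub>2\<close> by Rolle; but \<open>tanh\<^sup>2 (\<beta> z)\<close> is strictly increasing, so the derivative vanishes
  at most once on the positive axis.\<close>
lemma mf_residual_positive_zero_unique: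
  assumes "\<beta> > 1" "0 < a" "a < b" "mf_residual \<beta> a = 0" "mf_residual \<beta> b = 0"
  shows False
proof -
  have diff: "\<And>x. mf_residual \<beta> differentiable (at x)"
    using has_real_derivative_mf_residual real_differentiable_def by blast
  obtain z1 where z1: "0 < z1" "z1 < a" "(mf_residual \<beta> has_real_derivative 0) (at z1)"
    using Rolle[of 0 a "mf_residual \<beta>"] assms continuous_on_mf_residual diff
    by (auto simp: mf_residual_def)
  obtain z2 where z2: "a < z2" "z2 < b" "(mf_residual \<beta> has_real_derivative 0) (at z2)"
    using Rolle[of a b "mf_residual \<beta>"] assms continuous_on_mf_residual diff by auto
  have crit1: "1 - \<beta> * (1 - tanh (\<beta> * z1)^2) = 0"
    using DERIV_unique[OF has_real_derivative_mf_residual z1(3)] .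
  have crit2: "1 - \<beta> * (1 - tanh (\<beta> * z2)^2) = 0"
    using DERIV_unique[OF has_real_derivative_mf_residual z2(3)] .
  have "0 < tanh (\<beta> * z1)" "tanh (\<beta> * z1) < tanh (\<beta> * z2)"
    using z1 z2 assms by simp_all
  then have "tanh (\<beta> * z1)^2 < tanh (\<beta> * z2)^2"
    by (simp add: power_strict_mono)
  with crit1 crit2 assms show False
    by (smt (verit, ccfv_SIG) mult_less_cancel_left_pos)
qed

lemma mf_residual_positive_zero_exists:
  assumes "\<beta> > 1"
  obtains m where "m > 0" "mf_residual \<beta> m = 0"
proof -
  obtain d where d: "d > 0" "\<And>t. 0 < t \<Longrightarrow> t < d \<Longrightarrow> mf_residual \<beta> t < 0"
    using mf_residual_neg_near_0[OF assms] by blast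
  define t0 where "t0 = min (d/2) (1/2)"
  have t0: "0 < t0" "t0 \<le> 1" "mf_residual \<beta> t0 < 0"
    using d by (auto simp: t0_def)
  moreover have "mf_residual \<beta> 1 > 0"
    by (simp add: mf_residual_pos_ge_1)
  ultimately obtain x where "t0 \<le> x" "x \<le> 1" "mf_residual \<beta> x = 0"
    using IVT'[of "mf_residual \<beta>" t0 0 1] continuous_on_mf_residual by force
  with t0 show ?thesis
    by (intro that[of x]) auto
qed

lemma m_beta_characterization:
  assumes "\<beta> > 1"
  shows m_beta_pos: "m_beta \<beta> > 0"
    and m_beta_unique: "\<And>t. t > 0 \<Longrightarrow> mf_residual \<beta> t = 0 \<Longrightarrow> t = m_beta \<beta>"
proof -
  have fix_iff: "t = tanh (\<beta> * t) \<longleftrightarrow> mf_residual \<beta> t = 0" for t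
    by (simp add: mf_residual_def)
  obtain m where m: "m > 0" "mf_residual \<beta> m = 0"
    using mf_residual_positive_zero_exists[OF assms] .
  have "\<And>t. t > 0 \<Longrightarrow> mf_residual \<beta> t = 0 \<Longrightarrow> t = m"
    using mf_residual_positive_zero_unique[OF assms] m by (metis linorder_neqE_linordered_idom)
  with m have ex1: "\<exists>!m. m > 0 \<and> m = tanh (\<beta> * m)"
    unfolding fix_iff by blast
  have "m_beta \<beta> > 0 \<and> m_beta \<beta> = tanh (\<beta> * m_beta \<beta>)"
    unfolding m_beta_def using theI'[OF ex1] .
  with ex1 show "m_beta \<beta> > 0" "\<And>t. t > 0 \<Longrightarrow> mf_residual \<beta> t = 0 \<Longrightarrow> t = m_beta \<beta>"
    unfolding fix_iff by blast+
qed

lemma mf_residual_neg_below_m_beta: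
  assumes "\<beta> > 1" "0 < t" "t < m_beta \<beta>"
  shows "mf_residual \<beta> t < 0"
proof (rule ccontr)
  assume "\<not> ?thesis"
  then have nonneg: "mf_residual \<beta> t \<ge> 0" by simp
  obtain d where d: "d > 0" "\<And>e. 0 < e \<Longrightarrow> e < d \<Longrightarrow> mf_residual \<beta> e < 0"
    using mf_residual_neg_near_0[OF assms(1)] by blast
  define s where "s = min (d/2) (t/2)"
  have s: "0 < s" "s \<le> t" "mf_residual \<beta> s < 0"
    using d assms by (auto simp: s_def)
  then obtain x where "s \<le> x" "x \<le> t" "mf_residual \<beta> x = 0"
    using IVT'[of "mf_residual \<beta>" s 0 t] nonneg continuous_on_mf_residual by force
  then have "x = m_beta \<beta>"
    using m_beta_unique[OF assms(1), of x] s by linarith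
  with \<open>x \<le> t\<close> assms show False by linarith
qed

lemma mf_residual_pos_above_m_beta:
  assumes "\<beta> > 1" "m_beta \<beta> < t"
  shows "mf_residual \<beta> t > 0"
proof (rule ccontr)
  assume "\<not> ?thesis"
  then have nonpos: "mf_residual \<beta> t \<le> 0" by simp
  have "t + 1 \<ge> 1"
    using m_beta_pos[OF assms(1)] assms by linarith
  then have "mf_residual \<beta> (t + 1) > 0"
    by (rule mf_residual_pos_ge_1)
  then obtain x where "t \<le> x" "x \<le> t + 1" "mf_residual \<beta> x = 0"
    using IVT'[of "mf_residual \<beta>" t 0 "t + 1"] nonpos continuous_on_mf_residual by force
  then have "x = m_beta \<beta>"
    using m_beta_unique[OF assms(1), of x] m_beta_pos[OF assms(1)] assms by linarith
  with \<open>t \<le> x\<close> assms show False by linarith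
qed

section \<open>The mean-field potential\<close>

definition mf_potential :: "real \<Rightarrow> real \<Rightarrow> real" where
  "mf_potential \<beta> t = \<beta> * t\<^sup>2 / 2 - ln (cosh (\<beta> * t))"

lemma has_real_derivative_mf_potential:
  "(mf_potential \<beta> has_real_derivative \<beta> * mf_residual \<beta> t) (at t)"
proof -
  have "(mf_potential \<beta> has_real_derivative (\<beta> * t - \<beta> * tanh (\<beta> * t))) (at t)"
    unfolding mf_potential_def[abs_def]
    by (auto intro!: derivative_eq_intros simp: tanh_def)
  then show ?thesis
    by (simp add: mf_residual_def algebra_simps)
qed

lemma continuous_on_mf_potential: "continuous_on X (mf_potential \<beta>)"
  using has_real_derivative_mf_potential
  by (meson DERIV_isCont continuous_at_imp_continuous_on)

lemma mf_potential_abs: "mf_potential \<beta> \<bar>t\<bar> = mf_potential \<beta> t"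
  by (cases "t \<ge> 0") (auto simp: mf_potential_def)

lemma mf_potential_strict_antimono:
  assumes "\<beta> > 1" "0 \<le> a" "a < b" "b \<le> m_beta \<beta>"
  shows "mf_potential \<beta> b < mf_potential \<beta> a"
proof (rule DERIV_neg_imp_decreasing_open[OF assms(3) _ continuous_on_mf_potential])
  fix x assume "a < x" "x < b"
  then have "\<beta> * mf_residual \<beta> x < 0"
    using mf_residual_neg_below_m_beta[OF assms(1), of x] assms by (simp add: mult_pos_neg)
  then show "\<exists>y. (mf_potential \<beta> has_real_derivative y) (at x) \<and> y < 0"
    using has_real_derivative_mf_potential by blast
qed

lemma mf_potential_strict_mono:
  assumes "\<beta> > 1" "m_beta \<beta> \<le> a" "a < b"
  shows "mf_potential \<beta> a < mf_potential \<beta> b"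
proof (rule DERIV_pos_imp_increasing_open[OF assms(3) _ continuous_on_mf_potential])
  fix x assume "a < x" "x < b"
  then have "\<beta> * mf_residual \<beta> x > 0"
    using mf_residual_pos_above_m_beta[OF assms(1), of x] assms by simp
  then show "\<exists>y. (mf_potential \<beta> has_real_derivative y) (at x) \<and> y > 0"
    using has_real_derivative_mf_potential by blast
qed

lemma mf_potential_gap_outside_band:
  assumes "\<beta> > 1" "\<epsilon> > 0"
  obtains \<eta> where "\<eta> > 0"
    "\<And>w. \<not> (m_beta \<beta> - \<epsilon> \<le> \<bar>w\<bar> \<and> \<bar>w\<bar> \<le> m_beta \<beta> + \<epsilon>) \<Longrightarrow>
       mf_potential \<beta> w \<ge> mf_potential \<beta> (m_beta \<beta>) + \<eta>"
proof -
  define m where "m = m_beta \<beta>"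
  define \<phi> where "\<phi> = mf_potential \<beta>"
  define a where "a = max 0 (m - \<epsilon>)"
  have a: "0 \<le> a" "a < m"
    using m_beta_pos[OF assms(1)] assms by (auto simp: a_def m_def)
  have above: "\<phi> m < \<phi> (m + \<epsilon>)"
    using mf_potential_strict_mono[OF assms(1), of m "m + \<epsilon>"] assms by (simp add: m_def \<phi>_def)
  have below: "\<phi> m < \<phi> a"
    using mf_potential_strict_antimono[OF assms(1) a] by (simp add: m_def \<phi>_def)
  define \<eta> where "\<eta> = min (\<phi> (m + \<epsilon>) - \<phi> m) (\<phi> a - \<phi> m)"
  have "\<phi> w \<ge> \<phi> m + \<eta>" if w: "\<not> (m - \<epsilon> \<le> \<bar>w\<bar> \<and> \<bar>w\<bar> \<le> m + \<epsilon>)" for w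
  proof (cases "\<bar>w\<bar> > m + \<epsilon>")
    case True
    then have "\<phi> (m + \<epsilon>) < \<phi> \<bar>w\<bar>"
      using mf_potential_strict_mono[OF assms(1), of "m + \<epsilon>" "\<bar>w\<bar>"] assms
      by (simp add: m_def \<phi>_def)
    then show ?thesis
      by (simp add: \<eta>_def \<phi>_def mf_potential_abs)
  next
    case False
    with w assms(2) have "\<bar>w\<bar> < a" "a \<le> m"
      by (auto simp: a_def)
    then have "\<phi> a < \<phi> \<bar>w\<bar>"
      using mf_potential_strict_antimono[OF assms(1), of "\<bar>w\<bar>" a] by (simp add: m_def \<phi>_def)
    then show ?thesis
      by (simp add: \<eta>_def \<phi>_def mf_potential_abs)
  qed
  moreover have "\<eta> > 0"
    using above below by (simp add: \<eta>_def)
  ultimately show ?thesis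
    using that unfolding m_def \<phi>_def by blast
qed

lemma mf_potential_close_right:
  assumes "\<eta> > 0"
  obtains \<delta> where "\<delta> > 0" "\<And>t. t \<in> {m..m + \<delta>} \<Longrightarrow> mf_potential \<beta> t \<le> mf_potential \<beta> m + \<eta>"
proof -
  have "isCont (mf_potential \<beta>) m"
    using has_real_derivative_mf_potential by (rule DERIV_isCont)
  then obtain d where d: "d > 0"
    "\<And>t. dist t m < d \<Longrightarrow> dist (mf_potential \<beta> t) (mf_potential \<beta> m) < \<eta>"
    using assms unfolding continuous_at_eps_delta by blast
  show ?thesis
  proof (rule that[of "d/2"])
    fix t assume "t \<in> {m..m + d/2}"
    then have "dist (mf_potential \<beta> t) (mf_potential \<beta> m) < \<eta>"
      using d by (auto simp: dist_real_def)
    then show "mf_potential \<beta> t \<le> mf_potential \<beta> m + \<eta>"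
      by (simp add: dist_real_def)
  qed (use d in simp)
qed

lemma exp_neg_mf_potential_eq:
  assumes "\<beta> > 0"
  shows "exp (- mf_potential \<beta> t) = exp (\<beta>/2) / 2 * sqrt (2*pi/\<beta>) *
     (normal_density 1 (1/sqrt \<beta>) t + normal_density (-1) (1/sqrt \<beta>) t)"
proof -
  have norm: "sqrt (2*pi/\<beta>) * (1 / sqrt (2 * pi * (1/\<beta>))) = 1"
    using assms by simp
  have nd: "normal_density c (1/sqrt \<beta>) t =
      1 / sqrt (2 * pi * (1/\<beta>)) * exp (- (\<beta> * (t - c)\<^sup>2 / 2))" for c
    using assms by (simp add: normal_density_def power_divide field_simps)
  have "exp (- mf_potential \<beta> t) = exp (ln (cosh (\<beta>*t)) - \<beta>*t\<^sup>2/2)"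
    by (simp add: mf_potential_def)
  also have "\<dots> = cosh (\<beta>*t) / exp (\<beta>*t\<^sup>2/2)"
    by (simp only: exp_diff exp_ln[OF cosh_real_pos])
  also have "\<dots> = exp (- (\<beta>*t\<^sup>2/2)) * cosh (\<beta>*t)"
    by (simp only: exp_minus divide_inverse mult.commute)
  also have "\<dots> = exp (- (\<beta>*t\<^sup>2/2)) * (exp (\<beta>*t) + exp (-(\<beta>*t))) / 2"
    by (simp add: cosh_field_def)
  also have "\<dots> = exp (\<beta>/2) / 2 * (exp (- (\<beta> * (t - 1)\<^sup>2 / 2)) + exp (- (\<beta> * (t - (-1))\<^sup>2 / 2)))"
    by (simp add: exp_add[symmetric] distrib_left power2_eq_square algebra_simps
        add_divide_distrib diff_divide_distrib)
  also have "\<dots> = exp (\<beta>/2) / 2 * sqrt (2*pi/\<beta>) *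
     (normal_density 1 (1/sqrt \<beta>) t + normal_density (-1) (1/sqrt \<beta>) t)"
    unfolding nd using norm assms by (simp add: algebra_simps)
  finally show ?thesis .
qed

lemma integrable_exp_neg_mf_potential:
  assumes "\<beta> > 0"
  shows "integrable lborel (\<lambda>t. exp (- mf_potential \<beta> t))"
  unfolding exp_neg_mf_potential_eq[OF assms]
  by (intro integrable_mult_right Bochner_Integration.integrable_add integrable_normal_density)
     (use assms in auto)

section \<open>Integrating out the spins\<close>

lemma spins_values: "x \<in> spins n \<Longrightarrow> i < n \<Longrightarrow> x i = -1 \<or> x i = 1"
  by (auto simp: spins_def PiE_iff)

lemma Q_CW_quadratic_form:
  assumes "x \<in> spins n"
  shows "(\<Sum>i<n. \<Sum>j<n. Q_CW n i j * x i * x j) = ((\<Sum>i<n. x i)\<^sup>2 - real n) / real n"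
proof -
  have row: "(\<Sum>j<n. Q_CW n i j * x i * x j) = (x i * (\<Sum>j<n. x j) - 1) / real n"
    if i: "i < n" for i
  proof -
    have "(\<Sum>j<n. Q_CW n i j * x i * x j) =
        (\<Sum>j<n. x i * x j / real n - (if j = i then x i * x j / real n else 0))"
      by (rule sum.cong) (auto simp: Q_CW_def)
    also have "\<dots> = (\<Sum>j<n. x i * x j / real n) - x i * x i / real n"
      using i by (simp add: sum_subtractf)
    also have "x i * x i = 1"
      using spins_values[OF assms i] by auto
    finally show ?thesis
      by (simp add: sum_divide_distrib[symmetric] sum_distrib_left diff_divide_distrib)
  qed
  have "(\<Sum>i<n. \<Sum>j<n. Q_CW n i j * x i * x j) = (\<Sum>i<n. (x i * (\<Sum>j<n. x j) - 1) / real n)"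
    using row by (intro sum.cong) auto
  also have "\<dots> = ((\<Sum>i<n. x i) * (\<Sum>j<n. x j) - real n) / real n"
    by (simp add: sum_divide_distrib[symmetric] sum_subtractf sum_distrib_right)
  finally show ?thesis
    by (simp add: power2_eq_square)
qed

text \<open>Completing the square: the Gaussian factor cancels the quadratic interaction,
  leaving an exponent linear in the spins.\<close>
lemma ising_weight_mult_normal_density:
  assumes "n > 0" "\<beta> > 0" "x \<in> spins n"
  shows "ising_weight n \<beta> (Q_CW n) \<mu> x * normal_density (spin_mean n x) (sqrt (1/(real n*\<beta>))) t
    = 1 / sqrt (2*pi/(real n*\<beta>)) * exp (- \<beta>/2 - real n*\<beta>*t\<^sup>2/2 + (\<Sum>i<n. (\<beta>*t + \<mu> i) * x i))"
proof -
  define S where "S = (\<Sum>i<n. x i)"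
  define M where "M = (\<Sum>i<n. \<mu> i * x i)"
  have linear: "(\<Sum>i<n. (\<beta>*t + \<mu> i) * x i) = \<beta>*t*S + M"
    by (simp add: S_def M_def distrib_right sum.distrib sum_distrib_left mult.assoc)
  have weight: "ising_weight n \<beta> (Q_CW n) \<mu> x = exp (\<beta>/2 * ((S\<^sup>2 - real n)/real n) + M)"
    unfolding ising_weight_def Q_CW_quadratic_form[OF assms(3)] S_def M_def ..
  have density: "normal_density (spin_mean n x) (sqrt (1/(real n*\<beta>))) t
      = 1 / sqrt (2*pi/(real n*\<beta>)) * exp (- ((t - S/real n)\<^sup>2) / (2 * (1/(real n*\<beta>))))"
    using assms(1,2) by (simp add: normal_density_def spin_mean_def S_def)
  have square: "\<beta>/2 * ((S\<^sup>2 - real n)/real n) + M + (- ((t - S/real n)\<^sup>2) / (2 * (1/(real n*\<beta>))))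
      = - \<beta>/2 - real n*\<beta>*t\<^sup>2/2 + (\<beta>*t*S + M)"
    using assms by (simp add: field_simps power2_eq_square)
  have "exp (\<beta>/2 * ((S\<^sup>2 - real n)/real n) + M) *
      (1 / sqrt (2*pi/(real n*\<beta>)) * exp (- ((t - S/real n)\<^sup>2) / (2 * (1/(real n*\<beta>))))) =
      1 / sqrt (2*pi/(real n*\<beta>)) * exp (\<beta>/2 * ((S\<^sup>2 - real n)/real n) + M +
        (- ((t - S/real n)\<^sup>2) / (2 * (1/(real n*\<beta>)))))"
    by (simp only: exp_add mult_ac)
  then show ?thesis
    unfolding weight density linear square .
qed

lemma sum_spins_exp_linear: "(\<Sum>x\<in>spins n. exp (c * (\<Sum>i<n. x i))) = (2 * cosh c) ^ n"
proof -
  have "(\<Sum>x\<in>spins n. exp (c * (\<Sum>i<n. x i))) = (\<Sum>x\<in>spins n. \<Prod>i<n. exp (c * x i))"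
    by (simp add: sum_distrib_left exp_sum)
  also have "\<dots> = (\<Prod>i<n. \<Sum>y\<in>{-1,1}. exp (c * y))"
    unfolding spins_def by (rule prod_sum_PiE[symmetric]) auto
  also have "\<dots> = (\<Prod>i<n. 2 * cosh c)"
  proof -
    have "2 * cosh c = exp c + exp (-c)"
      by (simp add: cosh_field_def)
    then show ?thesis
      by (simp add: add.commute)
  qed
  finally show ?thesis
    by simp
qed

lemma sum_spins_exp_field_bounds:
  fixes \<mu> :: "nat \<Rightarrow> real" and n :: nat
  defines "a \<equiv> \<Sum>i<n. \<bar>\<mu> i\<bar>"
  shows "exp (-a) * (2 * cosh c) ^ n \<le> (\<Sum>x\<in>spins n. exp (\<Sum>i<n. (c + \<mu> i) * x i))"
    and "(\<Sum>x\<in>spins n. exp (\<Sum>i<n. (c + \<mu> i) * x i)) \<le> exp a * (2 * cosh c) ^ n"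
proof -
  have split: "exp (\<Sum>i<n. (c + \<mu> i) * x i) = exp (\<Sum>i<n. \<mu> i * x i) * exp (c * (\<Sum>i<n. x i))" for x
    by (simp add: distrib_right sum.distrib sum_distrib_left exp_add[symmetric] add.commute)
  have field: "\<bar>\<Sum>i<n. \<mu> i * x i\<bar> \<le> a" if x: "x \<in> spins n" for x
  proof -
    have "\<bar>\<Sum>i<n. \<mu> i * x i\<bar> \<le> (\<Sum>i<n. \<bar>\<mu> i * x i\<bar>)"
      by (rule sum_abs)
    also have "\<dots> = a"
    proof -
      have "\<bar>x i\<bar> = 1" if "i < n" for i
        using spins_values[OF x that] by auto
      then show ?thesis
        unfolding a_def by (intro sum.cong) (auto simp: abs_mult)
    qed
    finally show ?thesis .
  qed
  have field_lower: "- a \<le> (\<Sum>i<n. \<mu> i * x i)"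
    and field_upper: "(\<Sum>i<n. \<mu> i * x i) \<le> a" if "x \<in> spins n" for x
    using field[OF that] by linarith+
  have "(\<Sum>x\<in>spins n. exp (-a) * exp (c * (\<Sum>i<n. x i))) \<le> (\<Sum>x\<in>spins n. exp (\<Sum>i<n. (c + \<mu> i) * x i))"
    unfolding split using field_lower by (intro sum_mono mult_right_mono) auto
  then show "exp (-a) * (2 * cosh c) ^ n \<le> (\<Sum>x\<in>spins n. exp (\<Sum>i<n. (c + \<mu> i) * x i))"
    by (simp add: sum_distrib_left[symmetric] sum_spins_exp_linear)
  have "(\<Sum>x\<in>spins n. exp (\<Sum>i<n. (c + \<mu> i) * x i)) \<le> (\<Sum>x\<in>spins n. exp a * exp (c * (\<Sum>i<n. x i)))"
    unfolding split using field_upper by (intro sum_mono mult_right_mono) auto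
  then show "(\<Sum>x\<in>spins n. exp (\<Sum>i<n. (c + \<mu> i) * x i)) \<le> exp a * (2 * cosh c) ^ n"
    by (simp add: sum_distrib_left[symmetric] sum_spins_exp_linear)
qed

lemma exp_scaled_mf_potential:
  "exp (- real n * mf_potential \<beta> t) = exp (- (real n*\<beta>*t\<^sup>2/2)) * cosh (\<beta>*t) ^ n"
proof -
  have "exp (- real n * mf_potential \<beta> t) = exp (- (real n*\<beta>*t\<^sup>2/2) + real n * ln (cosh (\<beta>*t)))"
    by (simp add: mf_potential_def algebra_simps)
  also have "\<dots> = exp (- (real n*\<beta>*t\<^sup>2/2)) * exp (real n * ln (cosh (\<beta>*t)))"
    by (rule exp_add)
  also have "exp (real n * ln (cosh (\<beta>*t))) = cosh (\<beta>*t) ^ n"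
    by (simp add: exp_of_nat_mult)
  finally show ?thesis .
qed

text \<open>The Lebesgue density of the law of \<open>W\<^sub>n\<close>, multiplied by the partition function.\<close>
definition W_density :: "nat \<Rightarrow> real \<Rightarrow> (nat \<Rightarrow> real) \<Rightarrow> real \<Rightarrow> real" where
  "W_density n \<beta> \<mu> t = (\<Sum>x\<in>spins n. ising_weight n \<beta> (Q_CW n) \<mu> x *
     normal_density (spin_mean n x) (sqrt (1/(real n*\<beta>))) t)"

definition W_density_scale :: "nat \<Rightarrow> real \<Rightarrow> real" where
  "W_density_scale n \<beta> = 1 / sqrt (2*pi/(real n*\<beta>)) * exp (- \<beta>/2) * 2 ^ n"

lemma W_density_scale_pos: "n > 0 \<Longrightarrow> \<beta> > 0 \<Longrightarrow> W_density_scale n \<beta> > 0"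
  by (simp add: W_density_scale_def)

lemma W_density_bounds:
  fixes \<mu> :: "nat \<Rightarrow> real"
  assumes "n > 0" "\<beta> > 0"
  defines "a \<equiv> \<Sum>i<n. \<bar>\<mu> i\<bar>"
  shows "W_density_scale n \<beta> * exp (-a) * exp (- real n * mf_potential \<beta> t) \<le> W_density n \<beta> \<mu> t"
    and "W_density n \<beta> \<mu> t \<le> W_density_scale n \<beta> * exp a * exp (- real n * mf_potential \<beta> t)"
proof -
  define c where "c = 1 / sqrt (2*pi/(real n*\<beta>)) * exp (- \<beta>/2 - real n*\<beta>*t\<^sup>2/2)"
  have c: "c \<ge> 0"
    using assms(1,2) by (simp add: c_def)
  have density: "W_density n \<beta> \<mu> t = c * (\<Sum>x\<in>spins n. exp (\<Sum>i<n. (\<beta>*t + \<mu> i) * x i))"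
    unfolding W_density_def sum_distrib_left using ising_weight_mult_normal_density[OF assms(1,2)]
    by (intro sum.cong) (auto simp: c_def exp_add[symmetric])
  have scale: "c * (2 * cosh (\<beta>*t)) ^ n = W_density_scale n \<beta> * exp (- real n * mf_potential \<beta> t)"
    unfolding exp_scaled_mf_potential c_def W_density_scale_def exp_diff
    by (simp add: power_mult_distrib exp_minus field_simps)
  have "W_density_scale n \<beta> * exp (-a) * exp (- real n * mf_potential \<beta> t) =
      exp (-a) * (W_density_scale n \<beta> * exp (- real n * mf_potential \<beta> t))"
    by (simp only: mult_ac)
  also have "\<dots> = c * (exp (-a) * (2 * cosh (\<beta>*t)) ^ n)"
    by (simp only: scale[symmetric] mult_ac)
  also have "\<dots> \<le> W_density n \<beta> \<mu> t"
    unfolding density a_def by (rule mult_left_mono[OF sum_spins_exp_field_bounds(1) c])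
  finally show "W_density_scale n \<beta> * exp (-a) * exp (- real n * mf_potential \<beta> t) \<le> W_density n \<beta> \<mu> t" .
  have "W_density n \<beta> \<mu> t \<le> c * (exp a * (2 * cosh (\<beta>*t)) ^ n)"
    unfolding density a_def by (rule mult_left_mono[OF sum_spins_exp_field_bounds(2) c])
  also have "\<dots> = exp a * (c * (2 * cosh (\<beta>*t)) ^ n)"
    by (simp only: mult_ac)
  also have "\<dots> = W_density_scale n \<beta> * exp a * exp (- real n * mf_potential \<beta> t)"
    by (simp only: scale mult_ac)
  finally show "W_density n \<beta> \<mu> t \<le> W_density_scale n \<beta> * exp a * exp (- real n * mf_potential \<beta> t)" .
qed

lemma W_density_le_where_mf_potential_large:
  fixes \<mu> :: "nat \<Rightarrow> real"
  assumes "n > 0" "\<beta> > 0" "mf_potential \<beta> t \<ge> q"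
  defines "a \<equiv> \<Sum>i<n. \<bar>\<mu> i\<bar>"
  shows "W_density n \<beta> \<mu> t \<le>
    W_density_scale n \<beta> * exp (a - (real n - 1) * q) * exp (- mf_potential \<beta> t)"
proof -
  have "(real n - 1) * q \<le> (real n - 1) * mf_potential \<beta> t"
    using assms(1,3) by (intro mult_left_mono) auto
  then have "exp a * exp (- real n * mf_potential \<beta> t) \<le> exp (a - (real n - 1) * q) * exp (- mf_potential \<beta> t)"
    by (simp add: exp_add[symmetric] algebra_simps)
  then have "W_density_scale n \<beta> * exp a * exp (- real n * mf_potential \<beta> t) \<le>
      W_density_scale n \<beta> * exp (a - (real n - 1) * q) * exp (- mf_potential \<beta> t)"
    using W_density_scale_pos[OF assms(1,2)] by (simp add: mult.assoc)
  with W_density_bounds(2)[OF assms(1,2), of \<mu> t] show ?thesis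
    unfolding a_def by linarith
qed

lemma W_density_ge_where_mf_potential_small:
  fixes \<mu> :: "nat \<Rightarrow> real"
  assumes "n > 0" "\<beta> > 0" "mf_potential \<beta> t \<le> q"
  defines "a \<equiv> \<Sum>i<n. \<bar>\<mu> i\<bar>"
  shows "W_density_scale n \<beta> * exp (- a - real n * q) \<le> W_density n \<beta> \<mu> t"
proof -
  have "exp (- a - real n * q) \<le> exp (-a) * exp (- real n * mf_potential \<beta> t)"
    using assms(3) by (simp add: exp_add[symmetric] mult_left_mono)
  then have "W_density_scale n \<beta> * exp (- a - real n * q) \<le>
      W_density_scale n \<beta> * exp (-a) * exp (- real n * mf_potential \<beta> t)"
    using W_density_scale_pos[OF assms(1,2)] by (simp add: mult.assoc)
  with W_density_bounds(1)[OF assms(1,2), of \<mu> t] show ?thesis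
    unfolding a_def by linarith
qed

section \<open>The law of \<open>W\<^sub>n\<close>\<close>

definition W_mass :: "nat \<Rightarrow> real \<Rightarrow> (nat \<Rightarrow> real) \<Rightarrow> real set \<Rightarrow> real" where
  "W_mass n \<beta> \<mu> E = (\<Sum>x\<in>spins n. ising_weight n \<beta> (Q_CW n) \<mu> x *
     measure (density lborel (normal_density (spin_mean n x) (sqrt (1 / (real n * \<beta>))))) E)"

lemma W_prob_eq_W_mass_div: "W_prob n \<beta> (Q_CW n) \<mu> E = W_mass n \<beta> \<mu> E / ising_Z n \<beta> (Q_CW n) \<mu>"
  by (simp add: W_prob_def W_mass_def ising_prob_def ising_Z_def sum_divide_distrib)

lemma W_mass_nonneg: "W_mass n \<beta> \<mu> E \<ge> 0"
  unfolding W_mass_def ising_weight_def by (intro sum_nonneg mult_nonneg_nonneg) auto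

lemma W_mass_le_ising_Z:
  assumes "n > 0" "\<beta> > 0"
  shows "W_mass n \<beta> \<mu> E \<le> ising_Z n \<beta> (Q_CW n) \<mu>"
  unfolding W_mass_def ising_Z_def
proof (intro sum_mono mult_right_le_one_le)
  fix x
  have "sqrt (1 / (real n * \<beta>)) > 0"
    using assms by simp
  then interpret prob_space "density lborel (normal_density (spin_mean n x) (sqrt (1 / (real n * \<beta>))))"
    by (rule prob_space_normal_density)
  show "measure (density lborel (normal_density (spin_mean n x) (sqrt (1 / (real n * \<beta>))))) E \<le> 1"
    by (rule prob_le_1)
qed (auto simp: ising_weight_def)

lemma W_prob_le_W_mass_ratio:
  assumes "n > 0" "\<beta> > 0" "W_mass n \<beta> \<mu> I > 0"
  shows "W_prob n \<beta> (Q_CW n) \<mu> E \<le> W_mass n \<beta> \<mu> E / W_mass n \<beta> \<mu> I"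
proof -
  have "W_mass n \<beta> \<mu> I \<le> ising_Z n \<beta> (Q_CW n) \<mu>"
    by (rule W_mass_le_ising_Z[OF assms(1,2)])
  with assms(3) show ?thesis
    unfolding W_prob_eq_W_mass_div using W_mass_nonneg
    by (intro divide_left_mono) (auto intro: mult_pos_pos)
qed

lemma W_mass_eq_nn_integral:
  assumes "n > 0" "\<beta> > 0" "E \<in> sets borel"
  shows "ennreal (W_mass n \<beta> \<mu> E) = (\<integral>\<^sup>+ t. ennreal (W_density n \<beta> \<mu> t) * indicator E t \<partial>lborel)"
proof -
  define \<sigma> where "\<sigma> = sqrt (1 / (real n * \<beta>))"
  define w where "w x = ising_weight n \<beta> (Q_CW n) \<mu> x" for x
  have w: "w x \<ge> 0" for x
    by (simp add: w_def ising_weight_def)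
  have E: "E \<in> sets lborel"
    using assms(3) by simp
  have normal: "ennreal (measure (density lborel (normal_density c \<sigma>)) E)
      = (\<integral>\<^sup>+ t. ennreal (normal_density c \<sigma> t) * indicator E t \<partial>lborel)" for c
  proof -
    have "\<sigma> > 0"
      using assms by (simp add: \<sigma>_def)
    then interpret prob_space "density lborel (normal_density c \<sigma>)"
      by (rule prob_space_normal_density)
    show ?thesis
      using E by (simp add: emeasure_eq_measure[symmetric] emeasure_density)
  qed
  have "ennreal (W_mass n \<beta> \<mu> E) =
      (\<Sum>x\<in>spins n. ennreal (w x) * ennreal (measure (density lborel (normal_density (spin_mean n x) \<sigma>)) E))"
    unfolding W_mass_def w_def[symmetric] \<sigma>_def[symmetric]
    by (simp add: w sum_ennreal[symmetric] ennreal_mult)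
  also have "\<dots> = (\<Sum>x\<in>spins n. \<integral>\<^sup>+ t. ennreal (w x) *
      (ennreal (normal_density (spin_mean n x) \<sigma> t) * indicator E t) \<partial>lborel)"
    unfolding normal using E by (intro sum.cong refl nn_integral_cmult[symmetric]) auto
  also have "\<dots> = (\<integral>\<^sup>+ t. (\<Sum>x\<in>spins n. ennreal (w x) *
      (ennreal (normal_density (spin_mean n x) \<sigma> t) * indicator E t)) \<partial>lborel)"
    using E by (intro nn_integral_sum[symmetric]) auto
  also have "\<dots> = (\<integral>\<^sup>+ t. ennreal (W_density n \<beta> \<mu> t) * indicator E t \<partial>lborel)"
  proof (intro nn_integral_cong)
    fix t
    have "(\<Sum>x\<in>spins n. ennreal (w x) * ennreal (normal_density (spin_mean n x) \<sigma> t)) =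
        ennreal (W_density n \<beta> \<mu> t)"
      unfolding W_density_def w_def[symmetric] \<sigma>_def[symmetric]
      by (simp add: w sum_ennreal[symmetric] ennreal_mult)
    then show "(\<Sum>x\<in>spins n. ennreal (w x) * (ennreal (normal_density (spin_mean n x) \<sigma> t) * indicator E t)) =
        ennreal (W_density n \<beta> \<mu> t) * indicator E t"
      by (simp add: mult.assoc[symmetric] sum_distrib_right[symmetric])
  qed
  finally show ?thesis .
qed

lemma W_mass_le_of_W_density_le:
  assumes "n > 0" "\<beta> > 0" "E \<in> sets borel" "K \<ge> 0" "integrable lborel f" "\<And>t. f t \<ge> 0"
    and "\<And>t. t \<in> E \<Longrightarrow> W_density n \<beta> \<mu> t \<le> K * f t"
  shows "W_mass n \<beta> \<mu> E \<le> K * integral\<^sup>L lborel f"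
proof -
  have "ennreal (W_mass n \<beta> \<mu> E) = (\<integral>\<^sup>+ t. ennreal (W_density n \<beta> \<mu> t) * indicator E t \<partial>lborel)"
    by (rule W_mass_eq_nn_integral[OF assms(1-3)])
  also have "\<dots> \<le> (\<integral>\<^sup>+ t. ennreal K * ennreal (f t) \<partial>lborel)"
    using assms(4,6,7)
    by (intro nn_integral_mono) (auto simp: ennreal_mult[symmetric] indicator_def intro: ennreal_leI)
  also have "\<dots> = ennreal K * (\<integral>\<^sup>+ t. ennreal (f t) \<partial>lborel)"
    using borel_measurable_integrable[OF assms(5)] by (intro nn_integral_cmult) simp
  also have "\<dots> = ennreal (K * integral\<^sup>L lborel f)"
    using assms(4-6) by (simp add: nn_integral_eq_integral ennreal_mult)
  finally show ?thesis
    using assms(4-6) by (simp add: ennreal_le_iff integral_nonneg_AE)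
qed

lemma W_mass_ge_of_W_density_ge:
  assumes "n > 0" "\<beta> > 0" "L \<ge> 0" "u \<le> v" "\<And>t. t \<in> {u..v} \<Longrightarrow> L \<le> W_density n \<beta> \<mu> t"
  shows "L * (v - u) \<le> W_mass n \<beta> \<mu> {u..v}"
proof -
  have "ennreal (L * (v - u)) = (\<integral>\<^sup>+ t. ennreal L * indicator {u..v} t \<partial>lborel)"
    using assms(3,4) by (simp add: nn_integral_cmult_indicator ennreal_mult)
  also have "\<dots> \<le> (\<integral>\<^sup>+ t. ennreal (W_density n \<beta> \<mu> t) * indicator {u..v} t \<partial>lborel)"
    using assms(5) by (intro nn_integral_mono) (auto simp: indicator_def intro: ennreal_leI)
  also have "\<dots> = ennreal (W_mass n \<beta> \<mu> {u..v})"
    by (rule W_mass_eq_nn_integral[OF assms(1,2), symmetric]) simp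
  finally show ?thesis
    using W_mass_nonneg by (simp add: ennreal_le_iff)
qed

lemma W_mass_le_where_mf_potential_large:
  fixes \<mu> :: "nat \<Rightarrow> real"
  assumes "n > 0" "\<beta> > 0" "E \<in> sets borel" "\<And>w. w \<in> E \<Longrightarrow> mf_potential \<beta> w \<ge> q"
  defines "a \<equiv> \<Sum>i<n. \<bar>\<mu> i\<bar>"
  shows "W_mass n \<beta> \<mu> E \<le>
    W_density_scale n \<beta> * exp (a - (real n - 1) * q) * (\<integral>t. exp (- mf_potential \<beta> t) \<partial>lborel)"
proof (rule W_mass_le_of_W_density_le[OF assms(1-3)])
  show "W_density n \<beta> \<mu> t \<le>
      W_density_scale n \<beta> * exp (a - (real n - 1) * q) * exp (- mf_potential \<beta> t)" if "t \<in> E" for t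
    unfolding a_def by (rule W_density_le_where_mf_potential_large[OF assms(1,2) assms(4)[OF that]])
qed (use W_density_scale_pos[OF assms(1,2)] integrable_exp_neg_mf_potential[OF assms(2)] in auto)

lemma W_mass_ge_where_mf_potential_small:
  fixes \<mu> :: "nat \<Rightarrow> real"
  assumes "n > 0" "\<beta> > 0" "u \<le> v" "\<And>t. t \<in> {u..v} \<Longrightarrow> mf_potential \<beta> t \<le> q"
  defines "a \<equiv> \<Sum>i<n. \<bar>\<mu> i\<bar>"
  shows "W_density_scale n \<beta> * exp (- a - real n * q) * (v - u) \<le> W_mass n \<beta> \<mu> {u..v}"
proof (rule W_mass_ge_of_W_density_ge[OF assms(1,2) _ assms(3)])
  show "W_density_scale n \<beta> * exp (- a - real n * q) \<le> W_density n \<beta> \<mu> t" if "t \<in> {u..v}" for t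
    unfolding a_def by (rule W_density_ge_where_mf_potential_small[OF assms(1,2) assms(4)[OF that]])
qed (use W_density_scale_pos[OF assms(1,2)] in simp)

lemma W_prob_le_exp:
  fixes \<mu> :: "nat \<Rightarrow> real" and B :: "real set"
  assumes "n > 0" "\<beta> > 0" "\<delta> > 0" "B \<in> sets borel"
    and large: "\<And>w. w \<in> B \<Longrightarrow> mf_potential \<beta> w \<ge> p + \<eta>"
    and small: "\<And>t. t \<in> {m..m + \<delta>} \<Longrightarrow> mf_potential \<beta> t \<le> p + \<eta>/2"
  defines "a \<equiv> \<Sum>i<n. \<bar>\<mu> i\<bar>"
  shows "W_prob n \<beta> (Q_CW n) \<mu> B \<le>
    exp (2*a - real n * \<eta>/2) * (exp (p + \<eta>) * (\<integral>t. exp (- mf_potential \<beta> t) \<partial>lborel) / \<delta>)"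
proof -
  define D where "D = (\<integral>t. exp (- mf_potential \<beta> t) \<partial>lborel)"
  define K where "K = W_density_scale n \<beta>"
  define upper where "upper = K * exp (a - (real n - 1) * (p + \<eta>))"
  define lower where "lower = K * exp (- a - real n * (p + \<eta>/2))"
  have upper_bound: "W_mass n \<beta> \<mu> B \<le> upper * D"
    using W_mass_le_where_mf_potential_large[OF assms(1,2,4) large]
    unfolding upper_def K_def D_def a_def .
  have lower_bound: "lower * \<delta> \<le> W_mass n \<beta> \<mu> {m..m + \<delta>}"
    using W_mass_ge_where_mf_potential_small[of n \<beta> m "m + \<delta>"] assms(1-3) small
    unfolding lower_def K_def a_def by simp
  have lower_pos: "lower * \<delta> > 0"
    using W_density_scale_pos[OF assms(1,2)] assms(3) by (simp add: lower_def K_def)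
  have "W_prob n \<beta> (Q_CW n) \<mu> B \<le> W_mass n \<beta> \<mu> B / W_mass n \<beta> \<mu> {m..m + \<delta>}"
    using lower_bound lower_pos by (intro W_prob_le_W_mass_ratio[OF assms(1,2)]) linarith
  also have "\<dots> \<le> (upper * D) / (lower * \<delta>)"
    using upper_bound lower_bound lower_pos W_mass_nonneg[of n \<beta> \<mu> B] by (intro frac_le) auto
  also have "\<dots> = (upper / lower) * (D / \<delta>)"
    by simp
  also have "upper / lower = exp (a - (real n - 1) * (p + \<eta>)) / exp (- a - real n * (p + \<eta>/2))"
    unfolding upper_def lower_def using W_density_scale_pos[OF assms(1,2)] by (simp add: K_def)
  also have "\<dots> = exp ((a - (real n - 1) * (p + \<eta>)) - (- a - real n * (p + \<eta>/2)))"
    by (rule exp_diff[symmetric])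
  also have "(a - (real n - 1) * (p + \<eta>)) - (- a - real n * (p + \<eta>/2)) = (2*a - real n * \<eta>/2) + (p + \<eta>)"
    by (simp add: algebra_simps)
  also have "exp \<dots> * (D / \<delta>) = exp (2*a - real n * \<eta>/2) * (exp (p + \<eta>) * D / \<delta>)"
    by (simp add: exp_add)
  finally show ?thesis
    unfolding D_def .
qed

lemma exp_budget:
  fixes a K x \<eta> :: real
  assumes "a \<le> \<eta>/16 * x" "0 \<le> K" "K \<le> exp (\<eta>/8 * x)"
  shows "exp (2*a - x * \<eta>/2) * K \<le> exp (- (\<eta>/4) * x)"
proof -
  have "exp (2*a - x * \<eta>/2) * K \<le> exp (\<eta>/8 * x - x * \<eta>/2) * exp (\<eta>/8 * x)"
  proof (intro mult_mono)
    show "exp (2*a - x * \<eta>/2) \<le> exp (\<eta>/8 * x - x * \<eta>/2)"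
      using assms(1) by (simp add: algebra_simps)
  qed (use assms(2,3) in auto)
  also have "\<dots> = exp (- (\<eta>/4) * x)"
    by (simp add: exp_add[symmetric] algebra_simps)
  finally show ?thesis .
qed

lemma eventually_le_exp_linear:
  assumes "c > 0"
  shows "\<forall>\<^sub>F n in sequentially. K \<le> exp (c * real n)"
proof -
  have "filterlim (\<lambda>n::nat. exp (c * real n)) at_top sequentially"
    using assms by real_asymp
  then show ?thesis
    by (simp add: filterlim_at_top)
qed

lemma sum_abs_mu_S:
  assumes "S \<subseteq> {..<n}" "A \<ge> 0"
  shows "(\<Sum>i<n. \<bar>mu_S S A i\<bar>) = A * real (card S)"
proof -
  have "(\<Sum>i<n. \<bar>mu_S S A i\<bar>) = (\<Sum>i\<in>S. \<bar>mu_S S A i\<bar>)"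
    using assms(1) by (intro sum.mono_neutral_right) (auto simp: mu_S_def)
  also have "\<dots> = (\<Sum>i\<in>S. A)"
    using assms(2) by (intro sum.cong) (auto simp: mu_S_def)
  finally show ?thesis
    by simp
qed

lemma W_prob_eventually_le_exp:
  fixes \<mu> :: "nat \<Rightarrow> nat \<Rightarrow> real" and B :: "real set"
  assumes "\<beta> > 0" "\<eta> > 0" "\<delta> > 0" "B \<in> sets borel"
    and large: "\<And>w. w \<in> B \<Longrightarrow> mf_potential \<beta> w \<ge> p + \<eta>"
    and small: "\<And>t. t \<in> {m..m + \<delta>} \<Longrightarrow> mf_potential \<beta> t \<le> p + \<eta>/2"
    and field: "(\<lambda>n. (\<Sum>i<n. \<bar>\<mu> n i\<bar>) / real n) \<longlonglongrightarrow> 0"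
  shows "\<forall>\<^sub>F n in sequentially. W_prob n \<beta> (Q_CW n) (\<mu> n) B \<le> exp (- (\<eta>/4) * real n)"
proof -
  define K where "K = exp (p + \<eta>) * (\<integral>t. exp (- mf_potential \<beta> t) \<partial>lborel) / \<delta>"
  have K: "K \<ge> 0"
    unfolding K_def using assms(3) by (simp add: integral_nonneg_AE)
  have "\<forall>\<^sub>F n in sequentially. (\<Sum>i<n. \<bar>\<mu> n i\<bar>) / real n < \<eta>/16"
    using order_tendstoD(2)[OF field, of "\<eta>/16"] assms(2) by simp
  moreover have "\<forall>\<^sub>F n in sequentially. K \<le> exp (\<eta>/8 * real n)"
    using assms(2) by (intro eventually_le_exp_linear) simp
  moreover have "\<forall>\<^sub>F n in sequentially. n > 0"
    by (rule eventually_gt_at_top)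
  ultimately show ?thesis
  proof eventually_elim
    case (elim n)
    have "(\<Sum>i<n. \<bar>\<mu> n i\<bar>) \<le> \<eta>/16 * real n"
      using elim by (simp add: field_simps)
    moreover have "W_prob n \<beta> (Q_CW n) (\<mu> n) B \<le> exp (2 * (\<Sum>i<n. \<bar>\<mu> n i\<bar>) - real n * \<eta>/2) * K"
      using W_prob_le_exp[OF elim(3) assms(1,3,4) large small, where \<mu> = "\<mu> n"] unfolding K_def .
    ultimately show ?case
      using exp_budget[of "\<Sum>i<n. \<bar>\<mu> n i\<bar>" \<eta> "real n" K] elim(2) K by linarith
  qed
qed

theorem mainTheorem11:
  fixes \<beta> \<epsilon> :: real
  assumes "\<beta> > 1" and "\<epsilon> > 0"
  shows "\<exists>C>0. \<forall>(s :: nat \<Rightarrow> nat) (S :: nat \<Rightarrow> nat set) (A :: nat \<Rightarrow> real).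
     (\<forall>n. S n \<subseteq> {..<n} \<and> card (S n) = s n \<and> A n \<ge> 0) \<and>
     ((\<lambda>n. A n * real (s n) / real n) \<longlonglongrightarrow> 0) \<longrightarrow>
     (\<forall>\<^sub>F n in sequentially.
        W_prob n \<beta> (Q_CW n) (mu_S (S n) (A n))
          {w. \<not> (m_beta \<beta> - \<epsilon> \<le> \<bar>w\<bar> \<and> \<bar>w\<bar> \<le> m_beta \<beta> + \<epsilon>)}
        \<le> exp (- C * real n))"
proof -
  define m where "m = m_beta \<beta>"
  define B where "B = {w. \<not> (m_beta \<beta> - \<epsilon> \<le> \<bar>w\<bar> \<and> \<bar>w\<bar> \<le> m_beta \<beta> + \<epsilon>)}"
  obtain \<eta> where \<eta>: "\<eta> > 0" and large: "\<And>w. w \<in> B \<Longrightarrow> mf_potential \<beta> w \<ge> mf_potential \<beta> m + \<eta>"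
    by (rule mf_potential_gap_outside_band[OF assms]) (auto simp: B_def m_def)
  obtain \<delta> where \<delta>: "\<delta> > 0"
    and small: "\<And>t. t \<in> {m..m + \<delta>} \<Longrightarrow> mf_potential \<beta> t \<le> mf_potential \<beta> m + \<eta>/2"
    by (rule mf_potential_close_right[of "\<eta>/2" m \<beta>]) (use \<eta> in auto)
  have B: "B \<in> sets borel"
    unfolding B_def by measurable
  show ?thesis
    unfolding B_def[symmetric]
  proof (intro exI[of _ "\<eta>/4"] conjI allI impI)
    fix s :: "nat \<Rightarrow> nat" and S :: "nat \<Rightarrow> nat set" and A :: "nat \<Rightarrow> real"
    assume H: "(\<forall>n. S n \<subseteq> {..<n} \<and> card (S n) = s n \<and> A n \<ge> 0) \<and>
      ((\<lambda>n. A n * real (s n) / real n) \<longlonglongrightarrow> 0)"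
    then have "(\<lambda>n. (\<Sum>i<n. \<bar>mu_S (S n) (A n) i\<bar>) / real n) \<longlonglongrightarrow> 0"
      by (simp add: sum_abs_mu_S)
    then show "\<forall>\<^sub>F n in sequentially. W_prob n \<beta> (Q_CW n) (mu_S (S n) (A n)) B \<le> exp (- (\<eta>/4) * real n)"
      using W_prob_eventually_le_exp[OF _ \<eta> \<delta> B large small] assms(1) by simp
  qed (use \<eta> in simp)
qed

end
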